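(* Let $\sigma$ be a permutation of $\{1,2,\ldots,n\}$ which is a single cycle $(x_1\ x_2\ \ldots\ x_k)$, $k\ge1$ (fixing all other elements). If $|\sigma(x)-x|\le 2$ for all $x\in\{1,\ldots,n\}$, then either $X=\{x_1,\ldots,x_k\}$ is a set of consecutive integers and $\sigma=\sigma_X$ or $\sigma=\sigma_X^{-1}$, or $k=2$ and $|x_1-x_2|=2$.
   Context: For a set of consecutive integers $X=\{b,b+1,\dots,a\}$, $\sigma_X$ is the permutation (fixing everything outside $X$) defined as follows: if $|X|$ is odd, $\sigma_X$ is the cycle $(b\ b{+}2\ b{+}4\ \cdots\ a{-}2\ a\ a{-}1\ a{-}3\ \cdots\ b{+}1)$; if $|X|$ is even, $\sigma_X=(b\ b{+}2\ b{+}4\ \cdots\ a{-}1\ a\ a{-}2\ a{-}4\ \cdots\ b{+}1)$. In particular $\sigma_X$ is the identity if $|X|=1$ and the transposition $(b\ a)$ if $|X|=2$. *)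

theory Defs
  imports "HOL-Combinatorics.Combinatorics"
begin

text \<open>For |X| odd this is (b b+2 ... a a-1 a-3 ... b+1); for |X| even it is
  (b b+2 ... a-1 a a-2 ... b+1).\<close>
definition sigmaX_list :: "nat \<Rightarrow> nat \<Rightarrow> nat list" where
  "sigmaX_list b a =
     filter (\<lambda>x. even (x - b)) [b..<Suc a] @ rev (filter (\<lambda>x. odd (x - b)) [b..<Suc a])"

definition sigmaX :: "nat \<Rightarrow> nat \<Rightarrow> nat \<Rightarrow> nat" where
  "sigmaX b a = cycle_of_list (sigmaX_list b a)"

end

theory Submission
  imports Defs
begin

text \<open>The hypothesis says that cyclically consecutive entries
  differ by at most 2. Rotate the list so that it starts with its minimum b; the two cyclic
  neighbours of b are then b+1 and b+2, and after reversing the rest of the list if necessary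
  (which inverts the cycle) b+1 comes next. Deleting b leaves a cyclic list of the same kind starting
  with its minimum b+1, so by induction the list is b, b+2, b+4, ..., b+3, b+1 or b followed by
  the reverse of this tail: that is, the cycle is sigma_X or its inverse. The induction needs
  at least three entries; with two entries the only other possibility is a transposition of two
  numbers at distance 2.\<close>

lemma map_cycle_of_list: "distinct cs \<Longrightarrow> map (cycle_of_list cs) cs = rotate1 cs"
  using cyclic_rotation[of cs 1] by simp

lemma cycle_of_list_rotate1:
  assumes "distinct cs"
  shows "cycle_of_list (rotate1 cs) = cycle_of_list cs"
proof -
  have "map (cycle_of_list (rotate1 cs)) (rotate1 cs) = map (cycle_of_list cs) (rotate1 cs)"
    using map_cycle_of_list[of "rotate1 cs"] map_cycle_of_list[OF assms] assms
    by (simp add: rotate1_map[symmetric])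
  then have "\<forall>x\<in>set cs. cycle_of_list (rotate1 cs) x = cycle_of_list cs x"
    by (simp add: map_eq_conv)
  then show ?thesis
    by (metis ext id_outside_supp set_rotate1)
qed

lemma cycle_of_list_rotate:
  "distinct cs \<Longrightarrow> cycle_of_list (rotate n cs) = cycle_of_list cs"
  by (induction n) (simp_all add: cycle_of_list_rotate1)

lemma cycle_of_list_rev_comp:
  assumes "distinct cs"
  shows "cycle_of_list (rev cs) \<circ> cycle_of_list cs = id"
proof -
  have "map (cycle_of_list (rev cs)) cs = rev (rotate1 (rev cs))"
    using map_cycle_of_list[of "rev cs"] assms by (metis distinct_rev rev_map rev_rev_ident)
  then have "map (cycle_of_list (rev cs) \<circ> cycle_of_list cs) cs = rotate1 (rev (rotate1 (rev cs)))"
    using map_cycle_of_list[OF assms] by (simp flip: map_map rotate1_map)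
  also have "\<dots> = cs"
    by (cases cs rule: rev_cases) simp_all
  finally have "\<forall>x\<in>set cs. (cycle_of_list (rev cs) \<circ> cycle_of_list cs) x = x"
    by (metis map_eq_conv map_ident)
  then show ?thesis
    by (auto simp: fun_eq_iff id_outside_supp)
qed

lemma cycle_of_list_rev:
  assumes "distinct cs"
  shows "cycle_of_list (rev cs) = inv (cycle_of_list cs)"
  using cycle_of_list_rev_comp[OF assms] cycle_of_list_rev_comp[of "rev cs"] assms
  by (metis distinct_rev inv_unique_comp rev_rev_ident)

lemma hd_neq_last: "distinct xs \<Longrightarrow> 2 \<le> length xs \<Longrightarrow> hd xs \<noteq> last xs"
  by (cases xs rule: remdups_adj.cases) auto

definition cyclically :: "('a \<Rightarrow> 'a \<Rightarrow> bool) \<Rightarrow> 'a list \<Rightarrow> bool" where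
  "cyclically R xs \<longleftrightarrow> successively R xs \<and> R (last xs) (hd xs)"

lemma cyclically_rotate1: "cyclically R xs \<Longrightarrow> cyclically R (rotate1 xs)"
  by (cases xs) (auto simp: cyclically_def successively_append_iff successively_Cons split: if_splits)

lemma cyclically_rotate: "cyclically R xs \<Longrightarrow> cyclically R (rotate n xs)"
  by (induction n) (simp_all add: cyclically_rotate1)

lemma cyclically_rev: "symp R \<Longrightarrow> cyclically R (rev xs) \<longleftrightarrow> cyclically R xs"
  by (cases "xs = []")
     (auto simp: cyclically_def hd_rev last_rev intro: successively_mono dest: sympD)

lemma cyclically_cycle_of_list:
  assumes "distinct xs" "xs \<noteq> []" "\<And>x. x \<in> set xs \<Longrightarrow> R x (cycle_of_list xs x)"
  shows "cyclically R xs"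
proof -
  have map_xs: "map (cycle_of_list xs) xs = rotate1 xs"
    using assms(1) by (rule map_cycle_of_list)
  have "R (xs ! i) (xs ! Suc i)" if "Suc i < length xs" for i
  proof -
    have "cycle_of_list xs (xs ! i) = rotate1 xs ! i"
      using map_xs that by (metis Suc_lessD nth_map)
    also have "\<dots> = xs ! Suc i"
      using that by (simp add: nth_rotate1)
    finally show ?thesis
      using assms(3)[of "xs ! i"] that by simp
  qed
  moreover have "cycle_of_list xs (last xs) = hd xs"
    using map_xs assms(2) by (metis last_map rotate1_hd_tl last_snoc)
  ultimately show ?thesis
    using assms(3)[of "last xs"] assms(2) by (simp add: cyclically_def successively_conv_nth)
qed

lemma sigmaX_list_same: "sigmaX_list b b = [b]"
  by (simp add: sigmaX_list_def)

lemma sigmaX_list_less: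
  assumes "b < a"
  shows "sigmaX_list b a = b # rev (sigmaX_list (Suc b) a)"
proof -
  have "[b..<Suc a] = b # [Suc b..<Suc a]"
    using assms by (simp add: upt_conv_Cons)
  moreover have "filter (\<lambda>x. even (x - b)) [Suc b..<Suc a] = filter (\<lambda>x. odd (x - Suc b)) [Suc b..<Suc a]"
    and "filter (\<lambda>x. odd (x - b)) [Suc b..<Suc a] = filter (\<lambda>x. even (x - Suc b)) [Suc b..<Suc a]"
    by (auto intro!: filter_cong simp: Suc_diff_Suc)
  ultimately show ?thesis
    by (simp add: sigmaX_list_def)
qed

lemma set_sigmaX_list: "set (sigmaX_list b a) = {b..a}"
  by (auto simp: sigmaX_list_def)

lemma distinct_sigmaX_list: "distinct (sigmaX_list b a)"
  by (auto simp: sigmaX_list_def)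

lemma hd_sigmaX_list: "b \<le> a \<Longrightarrow> hd (sigmaX_list b a) = b"
  by (cases "b = a") (simp_all add: sigmaX_list_same sigmaX_list_less)

lemma last_sigmaX_list: "b < a \<Longrightarrow> last (sigmaX_list b a) = Suc b"
  using set_sigmaX_list[of "Suc b" a]
  by (auto simp: sigmaX_list_less hd_sigmaX_list last_rev)

lemma sigmaX_list_Suc: "sigmaX_list b (Suc b) = [b, Suc b]"
  by (simp add: sigmaX_list_less sigmaX_list_same)

lemma sigmaX_Suc: "sigmaX b (Suc b) = transpose b (Suc b)"
  by (simp add: sigmaX_def sigmaX_list_Suc)

lemma inv_sigmaX:
  assumes "b < a"
  shows "inv (sigmaX b a) = cycle_of_list (b # sigmaX_list (Suc b) a)"
proof -
  have dist: "distinct (b # sigmaX_list (Suc b) a)"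
    using distinct_sigmaX_list[of b a] by (simp add: sigmaX_list_less[OF assms])
  have "inv (sigmaX b a) = cycle_of_list (rev (b # rev (sigmaX_list (Suc b) a)))"
    using dist cycle_of_list_rev[of "b # rev (sigmaX_list (Suc b) a)"]
    by (simp add: sigmaX_def sigmaX_list_less[OF assms])
  also have "rev (b # rev (sigmaX_list (Suc b) a)) = rotate1 (b # sigmaX_list (Suc b) a)"
    by simp
  finally show ?thesis
    using cycle_of_list_rotate1[OF dist] by simp
qed

definition near :: "nat \<Rightarrow> nat \<Rightarrow> bool" where
  "near x y \<longleftrightarrow> x \<le> y + 2 \<and> y \<le> x + 2"

lemma symp_near: "symp near"
  by (auto simp: symp_def near_def)

lemma near_commute: "near x y \<longleftrightarrow> near y x"
  by (auto simp: near_def)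

lemma near_above: "b < y \<Longrightarrow> near b y \<Longrightarrow> y \<in> {Suc b, Suc (Suc b)}"
  by (auto simp: near_def)

lemma cyclically_near_Cons_min_cases:
  assumes "distinct (b # ys)" "2 \<le> length ys" "cyclically near (b # ys)" "\<forall>y\<in>set ys. b < y"
  shows "\<exists>a. Suc b < a \<and> (ys = sigmaX_list (Suc b) a \<or> ys = rev (sigmaX_list (Suc b) a))"
  using assms
proof (induction "length ys" arbitrary: b ys rule: less_induct)
  case less
  have from_succ: "\<exists>a. Suc b < a \<and> zs = sigmaX_list (Suc b) a"
    if zs: "distinct (b # zs)" "length zs = length ys" "cyclically near (b # zs)"
      "\<forall>z\<in>set zs. b < z" "hd zs = Suc b" for zs
  proof -
    obtain ws where zs_eq: "zs = Suc b # ws" and "ws \<noteq> []"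
      using zs(2,5) less.prems(2) by (cases zs) (auto simp flip: length_greater_0_conv)
    have "last zs \<in> {Suc b, Suc (Suc b)}"
      using zs(3,4) zs_eq by (intro near_above) (auto simp: cyclically_def near_commute)
    moreover have "last zs \<noteq> Suc b"
      using hd_neq_last[of zs] zs(1,2,5) less.prems(2) by simp
    ultimately have last_ws: "last ws = Suc (Suc b)"
      using zs_eq \<open>ws \<noteq> []\<close> by simp
    show ?thesis
    proof (cases "length ws = 1")
      case True
      then have "zs = sigmaX_list (Suc b) (Suc (Suc b))"
        using zs_eq last_ws by (cases ws) (auto simp: sigmaX_list_Suc)
      then show ?thesis
        using lessI by blast
    next
      case False
      have "\<exists>a. Suc (Suc b) < a \<and>
          (ws = sigmaX_list (Suc (Suc b)) a \<or> ws = rev (sigmaX_list (Suc (Suc b)) a))"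
      proof (rule less.hyps)
        show "length ws < length ys" "distinct (Suc b # ws)"
          using zs(1,2) zs_eq by simp_all
        show "2 \<le> length ws"
          using False \<open>ws \<noteq> []\<close> by (cases ws) (auto simp: Suc_le_eq)
        show "cyclically near (Suc b # ws)"
          using zs(3) zs_eq last_ws \<open>ws \<noteq> []\<close>
          by (auto simp: cyclically_def successively_Cons near_def)
        show "\<forall>w\<in>set ws. Suc b < w"
          using zs(1,4) zs_eq by (metis Suc_lessI distinct.simps(2) list.set_intros(1,2))
      qed
      then obtain a where a: "Suc (Suc b) < a"
        and ws: "ws = sigmaX_list (Suc (Suc b)) a \<or> ws = rev (sigmaX_list (Suc (Suc b)) a)"
        by blast
      have "ws = rev (sigmaX_list (Suc (Suc b)) a)"
        using ws last_ws last_sigmaX_list[OF a] by auto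
      then have "zs = sigmaX_list (Suc b) a"
        using a zs_eq by (simp add: sigmaX_list_less)
      moreover have "Suc b < a"
        using a by simp
      ultimately show ?thesis
        by blast
    qed
  qed
  obtain y ys' where ys_eq: "ys = y # ys'" "ys' \<noteq> []"
    using less.prems(2) by (cases ys rule: remdups_adj.cases) auto
  have "near b (hd ys)" "near b (last ys)"
    using less.prems(3) ys_eq by (auto simp: cyclically_def near_commute)
  moreover have "b < hd ys" "b < last ys"
    using less.prems(4) ys_eq by auto
  ultimately have "hd ys \<in> {Suc b, Suc (Suc b)}" "last ys \<in> {Suc b, Suc (Suc b)}"
    by (simp_all only: near_above)
  moreover have "hd ys \<noteq> last ys"
    using hd_neq_last[of ys] less.prems(1,2) by simp
  ultimately consider "hd ys = Suc b" | "hd (rev ys) = Suc b"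
    using ys_eq by (auto simp: hd_rev)
  then show ?case
  proof cases
    case 1
    then show ?thesis
      using from_succ[of ys] less.prems by auto
  next
    case 2
    have "cyclically near (rev (b # rev ys))"
      using less.prems(3) cyclically_rotate1[of near "b # ys"] by simp
    then have "cyclically near (b # rev ys)"
      by (simp only: cyclically_rev[OF symp_near])
    then obtain a where "Suc b < a" "rev ys = sigmaX_list (Suc b) a"
      using from_succ[of "rev ys"] 2 less.prems by auto
    then show ?thesis
      by (metis rev_rev_ident)
  qed
qed

lemma cycle_of_list_cyclically_near:
  assumes "distinct xs" "3 \<le> length xs" "cyclically near xs"
  shows "\<exists>b a. b < a \<and> set xs = {b..a} \<and>
           (cycle_of_list xs = sigmaX b a \<or> cycle_of_list xs = inv (sigmaX b a))"
proof -
  define b where "b = Min (set xs)"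
  have "xs \<noteq> []"
    using assms(2) by auto
  then have "b \<in> set xs"
    unfolding b_def by simp
  then obtain j where "j < length xs" "xs ! j = b"
    by (auto simp: in_set_conv_nth)
  then have "hd (rotate j xs) = b"
    by (simp add: hd_rotate_conv_nth \<open>xs \<noteq> []\<close>)
  moreover have "rotate j xs \<noteq> []"
    using \<open>xs \<noteq> []\<close> by simp
  ultimately obtain ys where rot: "rotate j xs = b # ys"
    by (metis list.collapse)
  have "distinct (b # ys)" "set (b # ys) = set xs" "length (b # ys) = length xs"
    using assms(1) by (simp_all flip: rot)
  moreover have "cyclically near (b # ys)"
    using cyclically_rotate[OF assms(3), of j] by (simp only: rot)
  moreover have "\<forall>y\<in>set ys. b < y"
  proof
    fix y
    assume "y \<in> set ys"
    moreover have "y \<in> set xs"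
      using \<open>y \<in> set ys\<close> \<open>set (b # ys) = set xs\<close> by auto
    ultimately have "b \<le> y" "y \<noteq> b"
      using \<open>distinct (b # ys)\<close> by (auto simp: b_def)
    then show "b < y"
      by simp
  qed
  ultimately obtain a where "Suc b < a"
    and ys: "ys = sigmaX_list (Suc b) a \<or> ys = rev (sigmaX_list (Suc b) a)"
    using cyclically_near_Cons_min_cases[of b ys] assms(2) by auto
  then have "b < a" by simp
  have "cycle_of_list xs = cycle_of_list (b # ys)"
    using cycle_of_list_rotate[OF assms(1)] by (simp flip: rot)
  moreover have "set ys = {Suc b..a}"
    using ys by (metis set_rev set_sigmaX_list)
  then have "set xs = {b..a}"
    using \<open>set (b # ys) = set xs\<close> \<open>b < a\<close> by (simp add: atLeastAtMost_insertL)
  moreover have "sigmaX b a = cycle_of_list (b # rev (sigmaX_list (Suc b) a))"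
    by (simp add: sigmaX_def sigmaX_list_less[OF \<open>b < a\<close>])
  ultimately show ?thesis
    using ys inv_sigmaX[OF \<open>b < a\<close>] \<open>b < a\<close> by auto
qed

lemma cycle_of_list_pair_near:
  assumes "x \<noteq> y" "near x y" "\<bar>int x - int y\<bar> \<noteq> 2"
  shows "\<exists>b. set [x, y] = {b..Suc b} \<and> cycle_of_list [x, y] = sigmaX b (Suc b)"
proof -
  have "y = Suc x \<or> x = Suc y"
    using assms unfolding near_def by arith
  then obtain b where "(x = b \<and> y = Suc b) \<or> (x = Suc b \<and> y = b)"
    by blast
  then have "set [x, y] = {b..Suc b} \<and> cycle_of_list [x, y] = sigmaX b (Suc b)"
    by (auto simp: sigmaX_Suc transpose_commute)
  then show ?thesis ..
qed

theorem proposition5p2: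
  fixes n :: nat and \<sigma> :: "nat \<Rightarrow> nat" and xs :: "nat list"
  assumes "\<sigma> permutes {1..n}"
    and "xs \<noteq> []" and "distinct xs" and "set xs \<subseteq> {1..n}"
    and "\<sigma> = cycle_of_list xs"
    and "\<forall>x\<in>{1..n}. \<bar>int (\<sigma> x) - int x\<bar> \<le> 2"
  shows "(\<exists>b a. b \<le> a \<and> set xs = {b..a} \<and> (\<sigma> = sigmaX b a \<or> \<sigma> = inv (sigmaX b a)))
         \<or> (length xs = 2 \<and> \<bar>int (xs ! 0) - int (xs ! 1)\<bar> = 2)"
proof -
  have "near x (\<sigma> x)" if "x \<in> set xs" for x
  proof -
    have "\<bar>int (\<sigma> x) - int x\<bar> \<le> 2"
      using assms(4,6) that by blast
    then show ?thesis
      unfolding near_def by linarith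
  qed
  then have near_xs: "cyclically near xs"
    using assms(2,3,5) by (intro cyclically_cycle_of_list) simp_all
  consider (single) x where "xs = [x]" | (pair) x y where "xs = [x, y]" | (long) "3 \<le> length xs"
    using assms(2) by (cases xs rule: remdups_adj.cases) (auto simp: Suc_le_eq)
  then show ?thesis
  proof cases
    case single
    then have "\<sigma> = sigmaX x x"
      using assms(5) by (simp add: sigmaX_def sigmaX_list_same)
    with single show ?thesis
      by (intro disjI1 exI[of _ x]) auto
  next
    case pair
    then show ?thesis
    proof (cases "\<bar>int x - int y\<bar> = 2")
      case False
      moreover have "x \<noteq> y" "near x y"
        using assms(3) near_xs pair by (simp_all add: cyclically_def)
      ultimately show ?thesis
        using cycle_of_list_pair_near[of x y] pair assms(5) by (metis le_SucI order_refl)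
    qed simp
  next
    case long
    then show ?thesis
      using cycle_of_list_cyclically_near[OF assms(3) long near_xs] assms(5) by auto
  qed
qed

end
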